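(* Let ${\mathcal M}:{\mathbb E}\to{\mathbb F}$ be a linear map between finite-dimensional Euclidean spaces, $\mathcal{K}\subseteq{\mathbb E}$ a convex cone, $b\in{\mathbb F}$, and ${\mathcal F}=\{X\in\mathcal{K}:{\mathcal M}(X)=b\}$ (assumed nonempty). Let $v_1,\dots,v_r\in b^{\perp}$ satisfy $v_1\in{\mathcal M}(\mathcal{K})^*$ and $v_i\in\big({\mathcal M}(\mathcal{K})\cap v_1^{\perp}\cap\cdots\cap v_{i-1}^{\perp}\big)^*$ for $i=2,\dots,r$. Put $N={\mathcal M}(\mathcal{K})\cap v_1^\perp\cap\cdots\cap v_r^\perp$ and $E=\mathcal{K}\cap({\mathcal M}^*v_1)^\perp\cap\cdots\cap({\mathcal M}^*v_r)^\perp$. Then: (1) for each $i$, $v_i$ exposes a face of ${\mathcal M}(\mathcal{K})\cap v_1^\perp\cap\cdots\cap v_{i-1}^\perp$ containing $b$, and ${\mathcal M}^*v_i$ exposes a face of $\mathcal{K}\cap({\mathcal M}^*v_1)^\perp\cap\cdots\cap({\mathcal M}^*v_{i-1})^\perp$ containing ${\mathcal F}$; (2) $N$ is a face of ${\mathcal M}(\mathcal{K})$ containing $b$, and $E$ is a face of $\mathcal{K}$ containing ${\mathcal F}$; (3) $N=\operatorname{face}(b,{\mathcal M}(\mathcal{K}))$ if and only if $E=\operatorname{face}({\mathcal F},\mathcal{K})$.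
   Context: $\operatorname{face}(S,C)$ denotes the smallest face of the cone $C$ containing the set $S$ (intersection of all faces containing $S$). $S^*$ is the dual cone, $v^\perp$ the orthogonal complement of $\{v\}$. A vector $w$ in the dual of a cone $C$ exposes the face $C\cap w^\perp$. *)

theory Defs
  imports "HOL-Analysis.Analysis"
begin

definition dual_cone :: "'a::real_inner set \<Rightarrow> 'a set" where
  "dual_cone S = {y. \<forall>x\<in>S. inner x y \<ge> 0}"

definition orth :: "'a::real_inner \<Rightarrow> 'a set" where
  "orth v = {x. inner x v = 0}"

definition face_hull :: "'a::real_vector set \<Rightarrow> 'a set \<Rightarrow> 'a set" where
  "face_hull S C = \<Inter>{T. T face_of C \<and> S \<subseteq> T}"

definition exposes :: "'a::real_inner \<Rightarrow> 'a set \<Rightarrow> 'a set \<Rightarrow> bool" where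
  "exposes w C T \<longleftrightarrow> w \<in> dual_cone C \<and> T = C \<inter> orth w"

end

theory Submission
  imports Defs
begin

text \<open>
  Since \<open>x \<bullet> M\<^sup>*w = M x \<bullet> w\<close>, the set \<open>K \<inter> (M\<^sup>*v\<^sub>1)\<^sup>\<perp> \<inter> \<dots> \<inter> (M\<^sup>*v\<^sub>i)\<^sup>\<perp>\<close> is the
  preimage in \<open>K\<close> of \<open>M(K) \<inter> v\<^sub>1\<^sup>\<perp> \<inter> \<dots> \<inter> v\<^sub>i\<^sup>\<perp>\<close>, and \<open>M\<^sup>*w\<close> lies in the dual of a set
  exactly when \<open>w\<close> lies in the dual of its image; so both chains consist of exposed faces,
  and \<open>b \<in> v\<^sub>i\<^sup>\<perp>\<close> keeps \<open>b\<close> and \<open>\<F>\<close> inside them.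
  For (3), the smallest face of a convex cone \<open>C\<close> containing \<open>p \<in> C\<close> consists of the
  \<open>z \<in> C\<close> with \<open>p - \<epsilon>z \<in> C\<close> for some \<open>\<epsilon> > 0\<close>. This description shows that
  \<open>face(\<F>, K)\<close> is the preimage in \<open>K\<close> of \<open>face(b, M(K))\<close>, and taking preimages in \<open>K\<close> is
  injective on subsets of \<open>M(K)\<close>.
\<close>

lemma face_of_convex_cone_scaleR:
  assumes C: "convex_cone C" and T: "T face_of C" and x: "x \<in> T" and c: "c \<ge> 0"
  shows "c *\<^sub>R x \<in> T"
proof (cases "x = 0")
  case True
  then show ?thesis using x by simp
next
  case False
  have xC: "x \<in> C" using T x face_of_imp_subset by blast
  have 0: "0 \<in> C" using C convex_cone_iff by blast
  have "x \<in> open_segment 0 (2 *\<^sub>R x)"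
    using False by (auto simp: in_segment intro!: exI[of _ "1/2"])
  moreover have "2 *\<^sub>R x \<in> C" using C xC by (intro convex_cone_scaleR) auto
  ultimately have zT: "0 \<in> T" using T 0 x face_ofD by blast
  show ?thesis
  proof (cases "c \<le> 1")
    case True
    have "c *\<^sub>R x \<in> closed_segment 0 x"
      using True c by (auto simp: in_segment intro!: exI[of _ c])
    then show ?thesis using convex_contains_segment face_of_imp_convex[OF T] zT x by blast
  next
    case False
    have "x \<in> open_segment 0 (c *\<^sub>R x)"
      using False \<open>x \<noteq> 0\<close> by (auto simp: in_segment intro!: exI[of _ "1/c"])
    moreover have "c *\<^sub>R x \<in> C" using C xC c convex_cone_scaleR by auto
    ultimately show ?thesis using T 0 x face_ofD by blast
  qed
qed

lemma face_of_convex_cone_add_imp: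
  assumes C: "convex_cone C" and T: "T face_of C"
    and a: "a \<in> C" and c: "c \<in> C" and ac: "a + c \<in> T"
  shows "a \<in> T"
proof -
  have mid: "(1/2) *\<^sub>R (a + c) \<in> T" using face_of_convex_cone_scaleR[OF C T ac] by simp
  show ?thesis
  proof (cases "a = c")
    case True
    then show ?thesis using mid by (simp add: scaleR_2[symmetric])
  next
    case False
    then have "(1/2) *\<^sub>R (a + c) \<in> open_segment a c"
      by (auto simp: in_segment scaleR_add_right intro!: exI[of _ "1/2"])
    then show ?thesis using T a c mid face_ofD by blast
  qed
qed

definition cone_dominated :: "'a::real_vector set \<Rightarrow> 'a \<Rightarrow> 'a set" where
  "cone_dominated C p = {z\<in>C. \<exists>e>0. p - e *\<^sub>R z \<in> C}"

lemma cone_dominated_convex_combination: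
  assumes C: "convex_cone C" and a: "a \<in> C" and c: "c \<in> C" and t: "0 < t" "t < 1"
    and e: "e > 0" and p: "p - e *\<^sub>R ((1 - t) *\<^sub>R a + t *\<^sub>R c) \<in> C"
  shows "a \<in> cone_dominated C p"
proof -
  have "p - (e * (1 - t)) *\<^sub>R a = (p - e *\<^sub>R ((1 - t) *\<^sub>R a + t *\<^sub>R c)) + (e * t) *\<^sub>R c"
    by (simp add: algebra_simps)
  also have "\<dots> \<in> C" using C p c e t by (intro convex_cone_add convex_cone_scaleR) auto
  finally show ?thesis
    using a e t unfolding cone_dominated_def by (auto intro!: exI[of _ "e * (1 - t)"])
qed

lemma cone_dominated_shrink:
  assumes C: "convex_cone C" and p: "p \<in> C" and z: "p - e' *\<^sub>R z \<in> C" and e: "0 < e" "e \<le> e'"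
  shows "p - e *\<^sub>R z \<in> C"
proof -
  have "p - e *\<^sub>R z = (e / e') *\<^sub>R (p - e' *\<^sub>R z) + (1 - e / e') *\<^sub>R p"
    using e by (simp add: algebra_simps)
  also have "\<dots> \<in> C" using C z p e by (intro convex_cone_add convex_cone_scaleR) auto
  finally show ?thesis .
qed

lemma convex_cone_dominated:
  assumes C: "convex_cone C" and p: "p \<in> C"
  shows "convex (cone_dominated C p)"
  unfolding convex_alt
proof (intro ballI allI impI)
  fix x y and u :: real
  assume x: "x \<in> cone_dominated C p" and y: "y \<in> cone_dominated C p" and u: "0 \<le> u \<and> u \<le> 1"
  obtain e1 where e1: "e1 > 0" "p - e1 *\<^sub>R x \<in> C" "x \<in> C"
    using x unfolding cone_dominated_def by auto
  obtain e2 where e2: "e2 > 0" "p - e2 *\<^sub>R y \<in> C" "y \<in> C"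
    using y unfolding cone_dominated_def by auto
  define e where "e = min e1 e2"
  have "p - e *\<^sub>R x \<in> C" "p - e *\<^sub>R y \<in> C"
    using cone_dominated_shrink[OF C p e1(2)] cone_dominated_shrink[OF C p e2(2)] e1 e2
    unfolding e_def by auto
  moreover have "p - e *\<^sub>R ((1 - u) *\<^sub>R x + u *\<^sub>R y) = (1 - u) *\<^sub>R (p - e *\<^sub>R x) + u *\<^sub>R (p - e *\<^sub>R y)"
    by (simp add: algebra_simps)
  ultimately have "p - e *\<^sub>R ((1 - u) *\<^sub>R x + u *\<^sub>R y) \<in> C"
    using C u by (metis convex_cone_add convex_cone_scaleR diff_ge_0_iff_ge)
  moreover have "(1 - u) *\<^sub>R x + u *\<^sub>R y \<in> C"
    using C e1 e2 u by (intro convex_cone_add convex_cone_scaleR) auto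
  moreover have "e > 0" using e1 e2 unfolding e_def by auto
  ultimately show "(1 - u) *\<^sub>R x + u *\<^sub>R y \<in> cone_dominated C p"
    unfolding cone_dominated_def by auto
qed

lemma cone_dominated_face_of:
  assumes C: "convex_cone C" and p: "p \<in> C"
  shows "cone_dominated C p face_of C"
  unfolding face_of_def
proof (intro conjI ballI impI)
  show "cone_dominated C p \<subseteq> C" unfolding cone_dominated_def by auto
  show "convex (cone_dominated C p)" using C p by (rule convex_cone_dominated)
  fix a c x
  assume a: "a \<in> C" and c: "c \<in> C" and x: "x \<in> cone_dominated C p" and xs: "x \<in> open_segment a c"
  obtain t where t: "0 < t" "t < 1" "x = (1 - t) *\<^sub>R a + t *\<^sub>R c"
    using xs by (auto simp: in_segment)
  obtain e where e: "e > 0" "p - e *\<^sub>R x \<in> C" using x unfolding cone_dominated_def by auto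
  show "a \<in> cone_dominated C p"
    using cone_dominated_convex_combination[OF C a c t(1,2) e(1)] e t by simp
  have "x = (1 - (1 - t)) *\<^sub>R c + (1 - t) *\<^sub>R a" using t by (simp add: algebra_simps)
  then have "p - e *\<^sub>R ((1 - (1 - t)) *\<^sub>R c + (1 - t) *\<^sub>R a) \<in> C" using e by simp
  then show "c \<in> cone_dominated C p"
    using cone_dominated_convex_combination[OF C c a _ _ e(1), of "1 - t"] t by simp
qed

lemma face_hull_unique:
  assumes "G face_of C" "S \<subseteq> G" "\<And>T. T face_of C \<Longrightarrow> S \<subseteq> T \<Longrightarrow> G \<subseteq> T"
  shows "face_hull S C = G"
  unfolding face_hull_def using assms by blast

text \<open>If \<open>p - e z \<in> C\<close>, a face through \<open>p = e z + (p - e z)\<close> must contain \<open>e z\<close>, hence \<open>z\<close>.\<close>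

lemma face_of_convex_cone_dominated_subset:
  assumes C: "convex_cone C" and T: "T face_of C" and p: "p \<in> T"
  shows "cone_dominated C p \<subseteq> T"
proof
  fix z assume "z \<in> cone_dominated C p"
  then obtain e where e: "e > 0" "p - e *\<^sub>R z \<in> C" "z \<in> C" unfolding cone_dominated_def by auto
  have "e *\<^sub>R z \<in> C" using C e by (intro convex_cone_scaleR) auto
  then have "e *\<^sub>R z \<in> T" using face_of_convex_cone_add_imp[OF C T _ e(2)] p by simp
  then have "(1/e) *\<^sub>R (e *\<^sub>R z) \<in> T"
    by (rule face_of_convex_cone_scaleR[OF C T]) (use e in simp)
  then show "z \<in> T" using e by simp
qed

lemma cone_dominated_self:
  assumes C: "convex_cone C" and p: "p \<in> C"
  shows "p \<in> cone_dominated C p"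
proof -
  have "p - (1/2) *\<^sub>R p = (1 - 1/2) *\<^sub>R p" by (metis scaleR_left_diff_distrib scaleR_one)
  also have "\<dots> \<in> C" using C p by (intro convex_cone_scaleR) auto
  finally show ?thesis using p unfolding cone_dominated_def by (auto intro!: exI[of _ "1/2"])
qed

lemma face_hull_singleton_convex_cone:
  assumes C: "convex_cone C" and p: "p \<in> C"
  shows "face_hull {p} C = cone_dominated C p"
proof (rule face_hull_unique)
  show "cone_dominated C p face_of C" using C p by (rule cone_dominated_face_of)
  show "{p} \<subseteq> cone_dominated C p" using cone_dominated_self[OF C p] by simp
qed (use C face_of_convex_cone_dominated_subset in blast)

lemma face_of_linear_preimage:
  assumes M: "linear M" and K: "convex K" and T: "T face_of M ` K"
  shows "{x\<in>K. M x \<in> T} face_of K"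
  unfolding face_of_def
proof (intro conjI ballI impI)
  show "{x\<in>K. M x \<in> T} \<subseteq> K" by auto
  have "{x\<in>K. M x \<in> T} = K \<inter> M -` T" by auto
  then show "convex {x\<in>K. M x \<in> T}"
    using K M T by (simp add: convex_Int convex_linear_vimage face_of_imp_convex)
  fix a c x
  assume a: "a \<in> K" and c: "c \<in> K" and x: "x \<in> {x\<in>K. M x \<in> T}" and xs: "x \<in> open_segment a c"
  obtain t where t: "0 < t" "t < 1" "x = (1 - t) *\<^sub>R a + t *\<^sub>R c"
    using xs by (auto simp: in_segment)
  have Mx: "M x = (1 - t) *\<^sub>R M a + t *\<^sub>R M c" using M t(3) by (simp add: linear_add linear_scale)
  have "M a \<in> T \<and> M c \<in> T"
  proof (cases "M a = M c")
    case True
    then show ?thesis using Mx x by (simp add: scaleR_diff_left[symmetric])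
  next
    case False
    then have "M x \<in> open_segment (M a) (M c)" using Mx t by (auto simp: in_segment)
    then show ?thesis using T a c x face_ofD by blast
  qed
  then show "a \<in> {x\<in>K. M x \<in> T}" "c \<in> {x\<in>K. M x \<in> T}" using a c by auto
qed

lemma face_hull_linear_fibre:
  assumes M: "linear M" and K: "convex_cone K" and b: "b \<in> M ` K"
  shows "face_hull {x\<in>K. M x = b} K = {x\<in>K. M x \<in> face_hull {b} (M ` K)}"
proof -
  have MK: "convex_cone (M ` K)" using K M convex_cone_linear_image by blast
  have Kc: "convex K" using K unfolding convex_cone_def by blast
  show ?thesis
    unfolding face_hull_singleton_convex_cone[OF MK b]
  proof (rule face_hull_unique)
    show "{x\<in>K. M x \<in> cone_dominated (M ` K) b} face_of K"
      using M Kc cone_dominated_face_of[OF MK b] by (rule face_of_linear_preimage)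
    show "{x\<in>K. M x = b} \<subseteq> {x\<in>K. M x \<in> cone_dominated (M ` K) b}"
      using cone_dominated_self[OF MK b] by auto
    fix T assume T: "T face_of K" "{x\<in>K. M x = b} \<subseteq> T"
    show "{x\<in>K. M x \<in> cone_dominated (M ` K) b} \<subseteq> T"
    proof
      fix x assume x: "x \<in> {x\<in>K. M x \<in> cone_dominated (M ` K) b}"
      obtain e y where e: "e > 0" and y: "y \<in> K" "M y = b - e *\<^sub>R M x"
        using x unfolding cone_dominated_def by auto
      have "e *\<^sub>R x + y \<in> K" using K x y e by (intro convex_cone_add convex_cone_scaleR) auto
      moreover have "M (e *\<^sub>R x + y) = b" using M y by (simp add: linear_add linear_scale)
      ultimately have "e *\<^sub>R x + y \<in> T" using T(2) by blast
      moreover have "x \<in> cone_dominated K (e *\<^sub>R x + y)"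
        using x y e unfolding cone_dominated_def by auto
      ultimately show "x \<in> T" using face_of_convex_cone_dominated_subset[OF K T(1)] by blast
    qed
  qed
qed

lemma restricted_vimage_eq_iff:
  assumes "A \<subseteq> f ` K" "B \<subseteq> f ` K"
  shows "{x\<in>K. f x \<in> A} = {x\<in>K. f x \<in> B} \<longleftrightarrow> A = B"
proof
  assume "{x\<in>K. f x \<in> A} = {x\<in>K. f x \<in> B}"
  then have "f ` {x\<in>K. f x \<in> A} = f ` {x\<in>K. f x \<in> B}" by simp
  moreover have "f ` {x\<in>K. f x \<in> C} = C" if "C \<subseteq> f ` K" for C using that by auto
  ultimately show "A = B" using assms by metis
qed simp

lemma orth_adjoint:
  fixes M :: "'a::euclidean_space \<Rightarrow> 'b::euclidean_space"
  assumes "linear M"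
  shows "orth (adjoint M w) = M -` orth w"
  using adjoint_works[OF assms] by (auto simp: orth_def)

lemma adjoint_in_dual_cone_iff:
  fixes M :: "'a::euclidean_space \<Rightarrow> 'b::euclidean_space"
  assumes "linear M"
  shows "adjoint M w \<in> dual_cone S \<longleftrightarrow> w \<in> dual_cone (M ` S)"
  using adjoint_works[OF assms] by (auto simp: dual_cone_def)

lemma exposed_face_of:
  assumes "convex C" "w \<in> dual_cone C"
  shows "(C \<inter> orth w) face_of C"
proof -
  have "C \<inter> orth w = C \<inter> {x. w \<bullet> x = 0}" unfolding orth_def by (auto simp: inner_commute)
  also have "\<dots> face_of C"
    using assms by (intro face_of_Int_supporting_hyperplane_ge) (auto simp: dual_cone_def inner_commute)
  finally show ?thesis .
qed

lemma convex_orth: "convex (orth w)"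
proof -
  have "orth w = {x. w \<bullet> x = 0}" unfolding orth_def by (auto simp: inner_commute)
  then show ?thesis using convex_hyperplane by metis
qed

lemma convex_Int_orths: "convex S \<Longrightarrow> convex (S \<inter> (\<Inter>j\<in>I. orth (w j)))"
  by (intro convex_Int convex_INT convex_orth) auto

lemma face_of_iterated_exposure:
  fixes w :: "nat \<Rightarrow> 'a::real_inner"
  assumes S: "convex S"
    and w: "\<forall>i\<in>{1..r}. w i \<in> dual_cone (S \<inter> (\<Inter>j\<in>{1..<i}. orth (w j)))"
  shows "(S \<inter> (\<Inter>j\<in>{1..r}. orth (w j))) face_of S"
  using w
proof (induction r)
  case 0
  then show ?case using S by (simp add: face_of_refl)
next
  case (Suc r)
  let ?S = "S \<inter> (\<Inter>j\<in>{1..r}. orth (w j))"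
  have "{1..<Suc r} = {1..r}" "{1..Suc r} = insert (Suc r) {1..r}" by auto
  then have eq: "S \<inter> (\<Inter>j\<in>{1..Suc r}. orth (w j)) = ?S \<inter> orth (w (Suc r))"
    and dual: "w (Suc r) \<in> dual_cone ?S"
    using Suc.prems by auto
  have "\<forall>i\<in>{1..r}. w i \<in> dual_cone (S \<inter> (\<Inter>j\<in>{1..<i}. orth (w j)))"
    using Suc.prems by auto
  then have IH: "?S face_of S" by (rule Suc.IH)
  have "?S \<inter> orth (w (Suc r)) face_of ?S" using exposed_face_of[OF convex_Int_orths[OF S] dual] .
  then show ?case unfolding eq using IH by (rule face_of_trans)
qed

theorem mainTheorem5:
  fixes M :: "'a::euclidean_space \<Rightarrow> 'b::euclidean_space"
    and K :: "'a set" and b :: 'b and v :: "nat \<Rightarrow> 'b" and r :: nat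
  assumes linM: "linear M"
    and coneK: "convex_cone K"
    and Fne: "{X\<in>K. M X = b} \<noteq> {}"
    and vb: "\<forall>i\<in>{1..r}. v i \<in> orth b"
    and vdual: "\<forall>i\<in>{1..r}. v i \<in> dual_cone (M ` K \<inter> (\<Inter>j\<in>{1..<i}. orth (v j)))"
  shows
    "(\<forall>i\<in>{1..r}.
        (let C = M ` K \<inter> (\<Inter>j\<in>{1..<i}. orth (v j)) in
           exposes (v i) C (C \<inter> orth (v i)) \<and> (C \<inter> orth (v i)) face_of C \<and> b \<in> C \<inter> orth (v i))
      \<and> (let D = K \<inter> (\<Inter>j\<in>{1..<i}. orth (adjoint M (v j))) in
           exposes (adjoint M (v i)) D (D \<inter> orth (adjoint M (v i)))
           \<and> (D \<inter> orth (adjoint M (v i))) face_of D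
           \<and> {X\<in>K. M X = b} \<subseteq> D \<inter> orth (adjoint M (v i))))
     \<and> ((M ` K \<inter> (\<Inter>j\<in>{1..r}. orth (v j))) face_of (M ` K)
        \<and> b \<in> M ` K \<inter> (\<Inter>j\<in>{1..r}. orth (v j)))
     \<and> ((K \<inter> (\<Inter>j\<in>{1..r}. orth (adjoint M (v j)))) face_of K
        \<and> {X\<in>K. M X = b} \<subseteq> K \<inter> (\<Inter>j\<in>{1..r}. orth (adjoint M (v j))))
     \<and> (M ` K \<inter> (\<Inter>j\<in>{1..r}. orth (v j)) = face_hull {b} (M ` K)
        \<longleftrightarrow> K \<inter> (\<Inter>j\<in>{1..r}. orth (adjoint M (v j))) = face_hull {X\<in>K. M X = b} K)"
proof -
  let ?C = "\<lambda>I. M ` K \<inter> (\<Inter>j\<in>I. orth (v j))"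
  let ?D = "\<lambda>I. K \<inter> (\<Inter>j\<in>I. orth (adjoint M (v j)))"
  have MK: "convex_cone (M ` K)" using coneK linM convex_cone_linear_image by blast
  then have MKc: "convex (M ` K)" by (simp add: convex_cone_def)
  have Kc: "convex K" using coneK by (simp add: convex_cone_def)
  have bK: "b \<in> M ` K" using Fne by auto
  have D_vimage: "?D I = {x\<in>K. M x \<in> ?C I}" for I using orth_adjoint[OF linM] by auto
  have b_C: "b \<in> ?C I" if "I \<subseteq> {1..r}" for I
    using that vb bK by (auto simp: orth_def inner_commute)
  have F_D: "{X\<in>K. M X = b} \<subseteq> ?D I" if "I \<subseteq> {1..r}" for I using b_C[OF that] D_vimage by auto
  have "M ` ?D I = ?C I" for I unfolding D_vimage by auto
  then have adual: "\<forall>i\<in>{1..r}. adjoint M (v i) \<in> dual_cone (?D {1..<i})"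
    using vdual by (simp add: adjoint_in_dual_cone_iff[OF linM])
  have "face_hull {b} (M ` K) \<subseteq> M ` K"
    using face_hull_singleton_convex_cone[OF MK bK] by (simp add: cone_dominated_def)
  then have hulls: "?C {1..r} = face_hull {b} (M ` K) \<longleftrightarrow> ?D {1..r} = face_hull {X\<in>K. M X = b} K"
    unfolding D_vimage face_hull_linear_fibre[OF linM coneK bK]
    by (subst restricted_vimage_eq_iff) auto
  show ?thesis
    unfolding Let_def exposes_def
  proof (intro conjI ballI hulls refl)
    fix i assume i: "i \<in> {1..r}"
    then have "insert i {1..<i} \<subseteq> {1..r}" by auto
    from b_C[OF this] F_D[OF this]
    show "b \<in> ?C {1..<i} \<inter> orth (v i)" "{X\<in>K. M X = b} \<subseteq> ?D {1..<i} \<inter> orth (adjoint M (v i))"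
      by auto
    show vC: "v i \<in> dual_cone (?C {1..<i})" using vdual i by auto
    show aD: "adjoint M (v i) \<in> dual_cone (?D {1..<i})" using adual i by auto
    show "(?C {1..<i} \<inter> orth (v i)) face_of ?C {1..<i}"
      using exposed_face_of[OF convex_Int_orths[OF MKc] vC] .
    show "(?D {1..<i} \<inter> orth (adjoint M (v i))) face_of ?D {1..<i}"
      using exposed_face_of[OF convex_Int_orths[OF Kc, where w = "\<lambda>j. adjoint M (v j)"] aD] .
  next
    show "?C {1..r} face_of M ` K" using MKc vdual by (rule face_of_iterated_exposure)
    show "?D {1..r} face_of K" using Kc adual by (rule face_of_iterated_exposure)
    show "b \<in> ?C {1..r}" by (rule b_C) simp
    show "{X\<in>K. M X = b} \<subseteq> ?D {1..r}" by (rule F_D) simp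
  qed
qed

end
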